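(* Let $\mathcal H$ be a finite index set, let $n$ and $k$ be integers, and for each $j\in\mathcal H$ let $\mathcal X_j\subseteq\mathbb R^m$ be closed and convex, with $\bigcap_{j\in\mathcal H}\mathcal X_j=\{x^*\}$. Suppose $\mathcal H$ is $k$-redundant. Suppose $\mu>0$ is such that for every $x\in\mathbb R^m$ and every $\mathcal S\subseteq\mathcal H$ with $|\mathcal S|\ge n-k$, $$\max_{i\in\mathcal S}\mathrm{dist}(x,\mathcal X_i)\ge\mu\,\mathrm{dist}\Big(x,\bigcap_{i\in\mathcal S}\mathcal X_i\Big).$$ Let $x_j\in\mathcal X_j$ be arbitrary for each $j\in\mathcal H$, and let $\mathcal S\subseteq\mathcal H$ with $|\mathcal S|\ge n-k$. Then $0<\mu\le 1$, and for every $i\in\mathcal H$, $$\max_{j\in\mathcal S}\|x_i-x_j\|^2\ge\mu^2\|x_i-x^*\|^2.$$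
   Context: $\mathrm{dist}(x,\mathcal C)=\|x-\mathrm P_{\mathcal C}[x]\|$, where $\mathrm P_{\mathcal C}$ is the Euclidean projection onto a closed convex set $\mathcal C$. $\mathcal H$ is $k$-redundant if for every $\mathcal S\subseteq\mathcal H$ with $|\mathcal S|\ge n-k$ we have $\bigcap_{i\in\mathcal S}\mathcal X_i=\bigcap_{i\in\mathcal H}\mathcal X_i$. (In the paper, $n$ is the total number of agents and $\mathcal H$ is the set of normal agents.) *)

theory Defs
  imports "HOL-Analysis.Analysis"
begin

text \<open>k-redundancy of the index set H of normal agents, n the total number of agents.\<close>
definition k_redundant :: "nat \<Rightarrow> nat \<Rightarrow> 'a set \<Rightarrow> ('a \<Rightarrow> 'b set) \<Rightarrow> bool" where
  "k_redundant n k H X \<longleftrightarrow>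
     (\<forall>S. S \<subseteq> H \<and> int (card S) \<ge> int n - int k \<longrightarrow> (\<Inter>i\<in>S. X i) = (\<Inter>i\<in>H. X i))"

end

theory Submission
  imports Defs
begin

text \<open>By k-redundancy the sets indexed by S still meet only in x*, so the regularity bound
  says that every point x lies at distance at least \<mu> dist(x, x*) from some X j with j in S.
  For x \<noteq> x* this distance is at most dist(x, x*), because x* lies in X j; hence \<mu> \<le> 1.
  For x = x i it is at most dist(x i, x j), because x j lies in X j; squaring gives the bound.\<close>

lemma INT_eq_singleton_nonempty_index:
  fixes X :: "'i \<Rightarrow> 'a::perfect_space set"
  assumes "(\<Inter>i\<in>S. X i) = {c}"
  shows "S \<noteq> {}"
  using assms UNIV_not_singleton by auto

lemma Max_infdist_ge_singleton_Inter:
  fixes X :: "'i \<Rightarrow> 'a::{metric_space, perfect_space} set"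
  assumes "finite S" and "(\<Inter>i\<in>S. X i) = {c}"
    and "\<mu> * infdist x (\<Inter>i\<in>S. X i) \<le> Max ((\<lambda>i. infdist x (X i)) ` S)"
  shows "\<exists>j\<in>S. \<mu> * dist x c \<le> infdist x (X j)"
proof -
  have "S \<noteq> {}"
    using assms(2) by (rule INT_eq_singleton_nonempty_index)
  with assms show ?thesis
    by (simp add: Max_ge_iff infdist_singleton)
qed

lemma regularity_constant_le_one:
  fixes X :: "'i \<Rightarrow> 'a::{metric_space, perfect_space} set"
  assumes far: "\<And>x. \<exists>j\<in>S. \<mu> * dist x c \<le> infdist x (X j)"
    and common: "\<And>j. j \<in> S \<Longrightarrow> c \<in> X j"
  shows "\<mu> \<le> 1"
proof -
  obtain x :: 'a where "x \<noteq> c"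
    using UNIV_not_singleton[of c] by blast
  then have pos: "dist x c > 0" by simp
  obtain j where "j \<in> S" and j: "\<mu> * dist x c \<le> infdist x (X j)"
    using far by blast
  note j
  also have "infdist x (X j) \<le> dist x c"
    using common[OF \<open>j \<in> S\<close>] by (rule infdist_le)
  finally have "\<mu> * dist x c \<le> 1 * dist x c" by simp
  then show ?thesis
    using pos by (rule mult_right_le_imp_le)
qed

lemma Max_dist_members_ge:
  fixes X :: "'i \<Rightarrow> 'a::metric_space set"
  assumes "finite S" and "0 \<le> \<mu>"
    and far: "\<exists>j\<in>S. \<mu> * dist z c \<le> infdist z (X j)"
    and members: "\<And>j. j \<in> S \<Longrightarrow> y j \<in> X j"
  shows "\<mu>\<^sup>2 * (dist z c)\<^sup>2 \<le> Max ((\<lambda>j. (dist z (y j))\<^sup>2) ` S)"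
proof -
  obtain j where "j \<in> S" and j: "\<mu> * dist z c \<le> infdist z (X j)"
    using far by blast
  note j
  also have "infdist z (X j) \<le> dist z (y j)"
    using members[OF \<open>j \<in> S\<close>] by (rule infdist_le)
  finally have "(\<mu> * dist z c)\<^sup>2 \<le> (dist z (y j))\<^sup>2"
    using \<open>0 \<le> \<mu>\<close> by (intro power_mono) auto
  also have "\<dots> \<le> Max ((\<lambda>j. (dist z (y j))\<^sup>2) ` S)"
    using \<open>finite S\<close> \<open>j \<in> S\<close> by (intro Max_ge) auto
  finally show ?thesis
    by (simp add: power_mult_distrib)
qed

theorem lemma1:
  fixes H :: "'a set" and n k :: nat and X :: "'a \<Rightarrow> (real ^ 'm) set"
    and xstar :: "real ^ 'm" and \<mu> :: real and xs :: "'a \<Rightarrow> real ^ 'm" and S :: "'a set"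
  assumes finH: "finite H"
    and closedX: "\<forall>j\<in>H. closed (X j)"
    and convexX: "\<forall>j\<in>H. convex (X j)"
    and inter: "(\<Inter>j\<in>H. X j) = {xstar}"
    and red: "k_redundant n k H X"
    and mu_pos: "\<mu> > 0"
    and mu_bound: "\<forall>x :: real ^ 'm. \<forall>T. T \<subseteq> H \<and> int (card T) \<ge> int n - int k \<longrightarrow>
         Max ((\<lambda>i. infdist x (X i)) ` T) \<ge> \<mu> * infdist x (\<Inter>i\<in>T. X i)"
    and xs_in: "\<forall>j\<in>H. xs j \<in> X j"
    and S_sub: "S \<subseteq> H"
    and S_card: "int (card S) \<ge> int n - int k"
  shows "0 < \<mu> \<and> \<mu> \<le> 1 \<and>
    (\<forall>i\<in>H. Max ((\<lambda>j. (norm (xs i - xs j))\<^sup>2) ` S) \<ge> \<mu>\<^sup>2 * (norm (xs i - xstar))\<^sup>2)"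
proof -
  have finS: "finite S"
    using finH S_sub by (rule finite_subset[rotated])
  have SI: "(\<Inter>i\<in>S. X i) = {xstar}"
    using red S_sub S_card inter unfolding k_redundant_def by auto
  have far: "\<exists>j\<in>S. \<mu> * dist x xstar \<le> infdist x (X j)" for x
    using Max_infdist_ge_singleton_Inter[OF finS SI] mu_bound S_sub S_card by blast
  have "\<mu> \<le> 1"
    using SI by (intro regularity_constant_le_one[of S \<mu> xstar X, OF far]) auto
  moreover have "\<mu>\<^sup>2 * (norm (xs i - xstar))\<^sup>2 \<le> Max ((\<lambda>j. (norm (xs i - xs j))\<^sup>2) ` S)" for i
    using Max_dist_members_ge[OF finS _ far, of xs] mu_pos xs_in S_sub
    by (auto simp: dist_norm)
  ultimately show ?thesis
    using mu_pos by blast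
qed

end
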